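(* Let $\kappa\ge0$, $\alpha\ge0$, $p,q\in[1,\infty]$, $\varepsilon,\widehat\varepsilon\ge0$, training points $(\boldsymbol x^i,y^i)$, $i\in[N]$, and auxiliary points $(\widehat{\boldsymbol x}^j,\widehat y^j)$, $j\in[\widehat N]$, be given. Consider the convex program (Inter-ARO$^\star$): $$\inf\ \varepsilon\lambda+\widehat\varepsilon\widehat\lambda+\frac1N\sum_{i=1}^N s_i+\frac1{\widehat N}\sum_{j=1}^{\widehat N}\widehat s_j$$ over $\boldsymbol\beta\in\mathbb{R}^n$, $\lambda\ge0$, $\widehat\lambda\ge0$, $\boldsymbol s\in\mathbb{R}^N_+$, $\widehat{\boldsymbol s}\in\mathbb{R}^{\widehat N}_+$, $\boldsymbol z^{l}_{ij}\in\mathbb{R}^n$ for $(i,j,l)\in[N]\times[\widehat N]\times\{-1,1\}$, subject to, for all $(i,j,l)\in[N]\times[\widehat N]\times\{-1,1\}$: $$L^\alpha\big(l\,\boldsymbol\beta^\top\boldsymbol x^i+(\boldsymbol z^l_{ij})^\top(\widehat{\boldsymbol x}^j-\boldsymbol x^i)\big)\le s_i+\frac{\kappa(1-ly^i)}2\lambda+\widehat s_j+\frac{\kappa(1-l\widehat y^j)}2\widehat\lambda,$$ $$\|l\boldsymbol\beta-\boldsymbol z^l_{ij}\|_{q^\star}\le\lambda,\qquad \|\boldsymbol z^l_{ij}\|_{q^\star}\le\widehat\lambda,$$ where $L^\alpha(z)=\log(1+\exp(-z+\alpha\|\boldsymbol\beta\|_{p^\star}))$. Then for every feasible point $(\boldsymbol\beta,\lambda,\widehat\lambda,\boldsymbol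 s,\widehat{\boldsymbol s},(\boldsymbol z^l_{ij}))$ of this program, $(\boldsymbol\beta,\lambda,\widehat\lambda,\boldsymbol s,\widehat{\boldsymbol s})$ satisfies all constraints of the semi-infinite program $$\sup_{\boldsymbol x\in\mathbb{R}^n}\{\ell^\alpha_{\boldsymbol\beta}(\boldsymbol x,l)-\lambda\|\boldsymbol x^i-\boldsymbol x\|_q-\widehat\lambda\|\widehat{\boldsymbol x}^j-\boldsymbol x\|_q\}\le s_i+\tfrac{\kappa(1-ly^i)}{2}\lambda+\widehat s_j+\tfrac{\kappa(1-l\widehat y^j)}{2}\widehat\lambda\ \ \forall (i,j,l),$$ and $\mathbb{E}_{\mathbb{Q}}[\ell^\alpha_{\boldsymbol\beta}(\boldsymbol x,y)]\le\varepsilon\lambda+\widehat\varepsilon\widehat\lambda+\frac1N\sum_i s_i+\frac1{\widehat N}\sum_j\widehat s_j$ for every $\mathbb{Q}\in\mathfrak B_\varepsilon(\mathbb{P}_N)\cap\mathfrak B_{\widehat\varepsilon}(\widehat{\mathbb{P}}_{\widehat N})$. In particular the optimal value of Inter-ARO$^\star$ is at least the optimal value of (Inter-ARO) $\inf_{\boldsymbol\beta}\sup_{\mathbb{Q}\in\mathfrak B_\varepsilon(\mathbb{P}_N)\cap\mathfrak B_{\widehat\varepsilon}(\widehat{\mathbb{P}}_{\widehat N})}\mathbb{E}_{\mathbb{Q}}[\ell^\alpha_{\boldsymbol\beta}(\boldsymbol x,y)]$.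
   Context: $1/p+1/p^\star=1$, $1/q+1/q^\star=1$. $\ell^\alpha_{\boldsymbol\beta}(\boldsymbol x,y)=\log(1+\exp(-y\boldsymbol\beta^\top\boldsymbol x+\alpha\|\boldsymbol\beta\|_{p^\star}))=L^\alpha(y\boldsymbol\beta^\top\boldsymbol x)$. $\Xi=\mathbb{R}^n\times\{-1,+1\}$ with metric $d((\boldsymbol x,y),(\boldsymbol x',y'))=\|\boldsymbol x-\boldsymbol x'\|_q+\kappa\mathbb 1[y\ne y']$; $\mathrm W$ is the induced type-1 Wasserstein distance on Borel probability measures with finite first moment; $\mathfrak B_\varepsilon(\mathbb{P})=\{\mathbb{Q}:\mathrm W(\mathbb{Q},\mathbb{P})\le\varepsilon\}$; $\mathbb{P}_N=\frac1N\sum_i\delta_{(\boldsymbol x^i,y^i)}$, $\widehat{\mathbb{P}}_{\widehat N}=\frac1{\widehat N}\sum_j\delta_{(\widehat{\boldsymbol x}^j,\widehat y^j)}$. The supremum over an empty set is $-\infty$. *)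

theory Defs
  imports "HOL-Probability.Probability"
begin

definition pnorm :: "ereal \<Rightarrow> real ^ 'n \<Rightarrow> real" where
  "pnorm p x = (if p = \<infinity> then Max (range (\<lambda>i. \<bar>x $ i\<bar>))
                else (\<Sum>i\<in>UNIV. \<bar>x $ i\<bar> powr real_of_ereal p) powr (1 / real_of_ereal p))"

definition conj_exp :: "ereal \<Rightarrow> ereal" where
  "conj_exp p = (if p = 1 then \<infinity> else if p = \<infinity> then 1
                 else ereal (real_of_ereal p / (real_of_ereal p - 1)))"

definition Lalpha :: "real \<Rightarrow> ereal \<Rightarrow> real ^ 'n \<Rightarrow> real \<Rightarrow> real" where
  "Lalpha \<alpha> p \<beta> z = ln (1 + exp (- z + \<alpha> * pnorm (conj_exp p) \<beta>))"

definition loss :: "real \<Rightarrow> ereal \<Rightarrow> real ^ 'n \<Rightarrow> real ^ 'n \<Rightarrow> real \<Rightarrow> real" where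
  "loss \<alpha> p \<beta> x y = Lalpha \<alpha> p \<beta> (y * (\<beta> \<bullet> x))"

definition Xi :: "((real ^ 'n) \<times> real) set" where
  "Xi = UNIV \<times> {-1, 1}"

definition dXi :: "real \<Rightarrow> ereal \<Rightarrow> ((real ^ 'n) \<times> real) \<Rightarrow> ((real ^ 'n) \<times> real) \<Rightarrow> real" where
  "dXi \<kappa> q u v = pnorm q (fst u - fst v) + \<kappa> * (if snd u \<noteq> snd v then 1 else 0)"

definition P1 :: "real \<Rightarrow> ereal \<Rightarrow> ((real ^ 'n) \<times> real) measure set" where
  "P1 \<kappa> q = {Q. sets Q = sets borel \<and> prob_space Q \<and> (AE u in Q. u \<in> Xi) \<and>
      (\<exists>u0\<in>Xi. (\<integral>\<^sup>+ u. ennreal (dXi \<kappa> q u u0) \<partial>Q) < \<infinity>)}"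

definition couplings :: "((real ^ 'n) \<times> real) measure \<Rightarrow> ((real ^ 'n) \<times> real) measure
     \<Rightarrow> (((real ^ 'n) \<times> real) \<times> ((real ^ 'n) \<times> real)) measure set" where
  "couplings Q P = {\<pi>. sets \<pi> = sets borel \<and> prob_space \<pi> \<and>
      distr \<pi> borel fst = Q \<and> distr \<pi> borel snd = P}"

definition wass :: "real \<Rightarrow> ereal \<Rightarrow> ((real ^ 'n) \<times> real) measure \<Rightarrow> ((real ^ 'n) \<times> real) measure \<Rightarrow> ennreal" where
  "wass \<kappa> q Q P = (INF \<pi>\<in>couplings Q P. \<integral>\<^sup>+ w. ennreal (dXi \<kappa> q (fst w) (snd w)) \<partial>\<pi>)"

definition wball :: "real \<Rightarrow> ereal \<Rightarrow> real \<Rightarrow> ((real ^ 'n) \<times> real) measure \<Rightarrow> ((real ^ 'n) \<times> real) measure set" where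
  "wball \<kappa> q \<epsilon> P = {Q \<in> P1 \<kappa> q. wass \<kappa> q Q P \<le> ennreal \<epsilon>}"

definition empirical :: "nat \<Rightarrow> (nat \<Rightarrow> real ^ 'n) \<Rightarrow> (nat \<Rightarrow> real) \<Rightarrow> ((real ^ 'n) \<times> real) measure" where
  "empirical N xs ys = distr (uniform_count_measure {..<N}) borel (\<lambda>i. (xs i, ys i))"

definition interARO_star_feasible ::
  "real \<Rightarrow> real \<Rightarrow> ereal \<Rightarrow> ereal \<Rightarrow> nat \<Rightarrow> (nat \<Rightarrow> real ^ 'n) \<Rightarrow> (nat \<Rightarrow> real) \<Rightarrow>
   nat \<Rightarrow> (nat \<Rightarrow> real ^ 'n) \<Rightarrow> (nat \<Rightarrow> real) \<Rightarrow>
   real ^ 'n \<Rightarrow> real \<Rightarrow> real \<Rightarrow> (nat \<Rightarrow> real) \<Rightarrow> (nat \<Rightarrow> real) \<Rightarrow>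
   (nat \<Rightarrow> nat \<Rightarrow> real \<Rightarrow> real ^ 'n) \<Rightarrow> bool" where
  "interARO_star_feasible \<kappa> \<alpha> p q N xs ys Nh xhs yhs \<beta> lam lamh s sh z \<longleftrightarrow>
     lam \<ge> 0 \<and> lamh \<ge> 0 \<and> (\<forall>i<N. s i \<ge> 0) \<and> (\<forall>j<Nh. sh j \<ge> 0) \<and>
     (\<forall>i<N. \<forall>j<Nh. \<forall>l\<in>{-1, 1::real}.
        Lalpha \<alpha> p \<beta> (l * (\<beta> \<bullet> xs i) + z i j l \<bullet> (xhs j - xs i))
          \<le> s i + \<kappa> * (1 - l * ys i) / 2 * lam + sh j + \<kappa> * (1 - l * yhs j) / 2 * lamh \<and>
        pnorm (conj_exp q) (l *\<^sub>R \<beta> - z i j l) \<le> lam \<and>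
        pnorm (conj_exp q) (z i j l) \<le> lamh)"

definition interARO_star_obj ::
  "real \<Rightarrow> real \<Rightarrow> nat \<Rightarrow> nat \<Rightarrow> real \<Rightarrow> real \<Rightarrow> (nat \<Rightarrow> real) \<Rightarrow> (nat \<Rightarrow> real) \<Rightarrow> real" where
  "interARO_star_obj \<epsilon> \<epsilon>h N Nh lam lamh s sh =
     \<epsilon> * lam + \<epsilon>h * lamh + (\<Sum>i<N. s i) / real N + (\<Sum>j<Nh. sh j) / real Nh"

definition interARO_star_value ::
  "real \<Rightarrow> real \<Rightarrow> ereal \<Rightarrow> ereal \<Rightarrow> real \<Rightarrow> real \<Rightarrow> nat \<Rightarrow> (nat \<Rightarrow> real ^ 'n) \<Rightarrow> (nat \<Rightarrow> real) \<Rightarrow>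
   nat \<Rightarrow> (nat \<Rightarrow> real ^ 'n) \<Rightarrow> (nat \<Rightarrow> real) \<Rightarrow> ereal" where
  "interARO_star_value \<kappa> \<alpha> p q \<epsilon> \<epsilon>h N xs ys Nh xhs yhs =
     (INF (\<beta>, lam, lamh, s, sh, z) \<in>
        {(\<beta>, lam, lamh, s, sh, z). interARO_star_feasible \<kappa> \<alpha> p q N xs ys Nh xhs yhs \<beta> lam lamh s sh z}.
        ereal (interARO_star_obj \<epsilon> \<epsilon>h N Nh lam lamh s sh))"

definition interARO_value ::
  "real \<Rightarrow> real \<Rightarrow> ereal \<Rightarrow> ereal \<Rightarrow> real \<Rightarrow> real \<Rightarrow> nat \<Rightarrow> (nat \<Rightarrow> real ^ 'n) \<Rightarrow> (nat \<Rightarrow> real) \<Rightarrow>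
   nat \<Rightarrow> (nat \<Rightarrow> real ^ 'n) \<Rightarrow> (nat \<Rightarrow> real) \<Rightarrow> ereal" where
  "interARO_value \<kappa> \<alpha> p q \<epsilon> \<epsilon>h N xs ys Nh xhs yhs =
     (INF \<beta>. SUP Q \<in> wball \<kappa> q \<epsilon> (empirical N xs ys) \<inter> wball \<kappa> q \<epsilon>h (empirical Nh xhs yhs).
        ereal (\<integral>u. loss \<alpha> p \<beta> (fst u) (snd u) \<partial>Q))"

end

theory Submission imports Defs begin

text \<open>For a feasible point write \<open>w = l \<beta>\<^sup>T x\<^sup>i + z\<^sup>T(x\<^sup>j - x\<^sup>i)\<close>. For any \<open>x\<close> the margin
  \<open>l \<beta>\<^sup>T x\<close> differs from \<open>w\<close> by \<open>(x - x\<^sup>i)\<^sup>T(l\<beta> - z) - (x\<^sup>j - x)\<^sup>T z\<close>, which by Hoelder's inequality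
  and the dual-norm constraints is at most \<open>\<lambda>\<parallel>x\<^sup>i - x\<parallel>\<^sub>q + \<lambda>'\<parallel>x\<^sup>j - x\<parallel>\<^sub>q\<close> in absolute value; since
  \<open>L\<^sup>\<alpha>\<close> is 1-Lipschitz this gives the semi-infinite constraints. Turning the label mismatch terms
  into the \<open>\<kappa>\<close>-part of the metric, the loss is pointwise dominated by
  \<open>min\<^sub>i (s\<^sub>i + \<lambda> d(\<xi>, \<xi>\<^sup>i)) + min\<^sub>j (s'\<^sub>j + \<lambda>' d(\<xi>, \<xi>'\<^sup>j))\<close>, and integrating each summand against
  near-optimal couplings with the two empirical measures bounds the expected loss over the
  intersection of the Wasserstein balls by the Inter-ARO\<open>\<^sup>\<star>\<close> objective.\<close>

lemma Holder_inequality_sum: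
  fixes r s :: real and a b :: "'i \<Rightarrow> real"
  assumes r: "r > 1" and s: "s > 1" and rs: "1/r + 1/s = 1" and fin: "finite I"
  shows "(\<Sum>i\<in>I. \<bar>a i\<bar> * \<bar>b i\<bar>)
           \<le> (\<Sum>i\<in>I. \<bar>a i\<bar> powr r) powr (1/r) * (\<Sum>i\<in>I. \<bar>b i\<bar> powr s) powr (1/s)"
proof -
  define A where "A = (\<Sum>i\<in>I. \<bar>a i\<bar> powr r)"
  define B where "B = (\<Sum>i\<in>I. \<bar>b i\<bar> powr s)"
  have "A \<ge> 0" "B \<ge> 0" unfolding A_def B_def by (auto intro: sum_nonneg)
  show ?thesis
  proof (cases "A = 0 \<or> B = 0")
    case True
    then have "(\<forall>i\<in>I. a i = 0) \<or> (\<forall>i\<in>I. b i = 0)"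
      unfolding A_def B_def using fin by (subst (asm) sum_nonneg_eq_0_iff; auto)+
    then show ?thesis by auto
  next
    case False
    with \<open>A \<ge> 0\<close> \<open>B \<ge> 0\<close> have "A > 0" "B > 0" by auto
    define An where "An = A powr (1/r)"
    define Bn where "Bn = B powr (1/s)"
    have "An > 0" "Bn > 0" using \<open>A > 0\<close> \<open>B > 0\<close> unfolding An_def Bn_def by auto
    have "An powr r = A" "Bn powr s = B"
      unfolding An_def Bn_def using \<open>A > 0\<close> \<open>B > 0\<close> r s by (simp_all add: powr_powr)
    have Young: "\<bar>a i\<bar> * \<bar>b i\<bar> / (An * Bn) \<le> \<bar>a i\<bar> powr r / (A * r) + \<bar>b i\<bar> powr s / (B * s)" for i
    proof -
      have "(\<bar>a i\<bar>/An) * (\<bar>b i\<bar>/Bn) \<le> (\<bar>a i\<bar>/An) powr r / r + (\<bar>b i\<bar>/Bn) powr s / s"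
        using Youngs_inequality[OF r s rs, of "\<bar>a i\<bar>/An" "\<bar>b i\<bar>/Bn"] \<open>An > 0\<close> \<open>Bn > 0\<close> by auto
      also have "\<dots> = \<bar>a i\<bar> powr r / (A * r) + \<bar>b i\<bar> powr s / (B * s)"
        using \<open>An > 0\<close> \<open>Bn > 0\<close> \<open>An powr r = A\<close> \<open>Bn powr s = B\<close> by (simp add: powr_divide)
      finally show ?thesis by simp
    qed
    have "(\<Sum>i\<in>I. \<bar>a i\<bar> * \<bar>b i\<bar>) / (An * Bn) = (\<Sum>i\<in>I. \<bar>a i\<bar> * \<bar>b i\<bar> / (An * Bn))"
      by (simp add: sum_divide_distrib)
    also have "\<dots> \<le> (\<Sum>i\<in>I. \<bar>a i\<bar> powr r / (A * r) + \<bar>b i\<bar> powr s / (B * s))"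
      by (intro sum_mono Young)
    also have "\<dots> = A / (A * r) + B / (B * s)"
      unfolding A_def B_def by (simp add: sum.distrib sum_divide_distrib)
    also have "\<dots> = 1" using \<open>A > 0\<close> \<open>B > 0\<close> rs by simp
    finally show ?thesis using \<open>An > 0\<close> \<open>Bn > 0\<close> unfolding An_def Bn_def A_def B_def
      by (simp add: divide_le_eq)
  qed
qed

lemma abs_component_le_pnorm_infinity: "\<bar>x $ i\<bar> \<le> pnorm \<infinity> x"
  unfolding pnorm_def by (simp add: Max_ge)

lemma pnorm_nonneg: "pnorm p x \<ge> 0"
proof (cases "p = \<infinity>")
  case True
  then show ?thesis using abs_component_le_pnorm_infinity[of x] abs_ge_zero order_trans by blast
qed (simp add: pnorm_def)

lemma pnorm_minus_commute: "pnorm p (x - y) = pnorm p (y - x)"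
  unfolding pnorm_def by (simp add: abs_minus_commute)

lemma pnorm_one: "pnorm 1 x = (\<Sum>i\<in>UNIV. \<bar>x $ i\<bar>)"
  unfolding pnorm_def by (simp add: sum_nonneg)

lemma abs_inner_le_sum_abs_mult: "\<bar>x \<bullet> y\<bar> \<le> (\<Sum>i\<in>UNIV. \<bar>x $ i\<bar> * \<bar>y $ i\<bar>)"
  unfolding inner_vec_def by (rule order.trans[OF sum_abs]) (simp add: abs_mult)

lemma abs_inner_le_pnorm_infinity_pnorm_one: "\<bar>x \<bullet> y\<bar> \<le> pnorm \<infinity> x * pnorm 1 y"
proof -
  have "\<bar>x \<bullet> y\<bar> \<le> (\<Sum>i\<in>UNIV. pnorm \<infinity> x * \<bar>y $ i\<bar>)"
    using abs_inner_le_sum_abs_mult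
    by (rule order.trans) (intro sum_mono mult_right_mono abs_component_le_pnorm_infinity; simp)
  then show ?thesis by (simp add: pnorm_one sum_distrib_left)
qed

lemma abs_inner_le_pnorm_conj_exp:
  assumes "1 \<le> p"
  shows "\<bar>x \<bullet> y\<bar> \<le> pnorm p x * pnorm (conj_exp p) y"
proof -
  consider "p = 1" | "p = \<infinity>" | r where "p = ereal r" "r > 1"
    using assms by (cases p) (auto, force)
  then show ?thesis
  proof cases
    case 1
    then show ?thesis using abs_inner_le_pnorm_infinity_pnorm_one[of y x]
      by (simp add: conj_exp_def inner_commute mult.commute)
  next
    case 2
    then show ?thesis using abs_inner_le_pnorm_infinity_pnorm_one[of x y] by (simp add: conj_exp_def)
  next
    case 3
    define s where "s = r / (r - 1)"
    have "s > 1" "1/r + 1/s = 1" using 3 unfolding s_def by (simp_all add: field_simps)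
    have "conj_exp p = ereal s" using 3 unfolding conj_exp_def s_def by auto
    have "\<bar>x \<bullet> y\<bar>
        \<le> (\<Sum>i\<in>UNIV. \<bar>x $ i\<bar> powr r) powr (1/r) * (\<Sum>i\<in>UNIV. \<bar>y $ i\<bar> powr s) powr (1/s)"
      using abs_inner_le_sum_abs_mult
      by (rule order.trans) (rule Holder_inequality_sum[OF 3(2) \<open>s > 1\<close> \<open>1/r + 1/s = 1\<close>]; simp)
    then show ?thesis using 3 \<open>conj_exp p = ereal s\<close> unfolding pnorm_def by simp
  qed
qed

lemma Lalpha_add_le: "Lalpha \<alpha> p \<beta> (w + a) \<le> Lalpha \<alpha> p \<beta> w + \<bar>a\<bar>"
proof -
  define c where "c = \<alpha> * pnorm (conj_exp p) \<beta>"
  have "exp (- (w + a) + c) \<le> exp (- w + c) * exp \<bar>a\<bar>"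
    by (simp add: exp_add[symmetric])
  moreover have "1 \<le> exp \<bar>a\<bar>" by simp
  ultimately have "1 + exp (- (w + a) + c) \<le> (1 + exp (- w + c)) * exp \<bar>a\<bar>"
    unfolding distrib_right mult_1_left by linarith
  then have "ln (1 + exp (- (w + a) + c)) \<le> ln ((1 + exp (- w + c)) * exp \<bar>a\<bar>)"
    by (intro ln_mono) (auto simp: add_pos_pos)
  also have "\<dots> = ln (1 + exp (- w + c)) + \<bar>a\<bar>"
    using add_pos_pos[OF zero_less_one exp_gt_zero, of "- w + c"] by (simp add: ln_mult)
  finally show ?thesis unfolding Lalpha_def c_def .
qed

lemma loss_minus_transport_le:
  assumes "lam \<ge> 0" "lamh \<ge> 0" "1 \<le> q"
    and L: "Lalpha \<alpha> p \<beta> (l * (\<beta> \<bullet> xi) + z \<bullet> (xh - xi)) \<le> R"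
    and dual1: "pnorm (conj_exp q) (l *\<^sub>R \<beta> - z) \<le> lam"
    and dual2: "pnorm (conj_exp q) z \<le> lamh"
  shows "loss \<alpha> p \<beta> x l - lam * pnorm q (xi - x) - lamh * pnorm q (xh - x) \<le> R"
proof -
  define w where "w = l * (\<beta> \<bullet> xi) + z \<bullet> (xh - xi)"
  define a where "a = (x - xi) \<bullet> (l *\<^sub>R \<beta> - z) - (xh - x) \<bullet> z"
  have "l * (\<beta> \<bullet> x) = w + a"
    unfolding w_def a_def by (simp add: inner_diff_left inner_diff_right inner_commute algebra_simps)
  have "\<bar>(x - xi) \<bullet> (l *\<^sub>R \<beta> - z)\<bar> \<le> pnorm q (xi - x) * lam"
    using abs_inner_le_pnorm_conj_exp[OF \<open>1 \<le> q\<close>, of "x - xi" "l *\<^sub>R \<beta> - z"] dual1 pnorm_nonneg[of q "x - xi"]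
    by (metis mult_left_mono order_trans pnorm_minus_commute)
  moreover have "\<bar>(xh - x) \<bullet> z\<bar> \<le> pnorm q (xh - x) * lamh"
    using abs_inner_le_pnorm_conj_exp[OF \<open>1 \<le> q\<close>, of "xh - x" z] dual2 pnorm_nonneg[of q "xh - x"]
    by (metis mult_left_mono order_trans)
  ultimately have "\<bar>a\<bar> \<le> lam * pnorm q (xi - x) + lamh * pnorm q (xh - x)"
    unfolding a_def by (simp add: mult.commute)
  moreover have "loss \<alpha> p \<beta> x l \<le> Lalpha \<alpha> p \<beta> w + \<bar>a\<bar>"
    unfolding loss_def \<open>l * (\<beta> \<bullet> x) = w + a\<close> by (rule Lalpha_add_le)
  ultimately show ?thesis using L unfolding w_def by linarith
qed

lemma interARO_star_feasibleD:
  assumes "interARO_star_feasible \<kappa> \<alpha> p q N xs ys Nh xhs yhs \<beta> lam lamh s sh z"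
  shows "lam \<ge> 0" "lamh \<ge> 0" "\<forall>i<N. s i \<ge> 0" "\<forall>j<Nh. sh j \<ge> 0"
    and "\<And>i j l. \<lbrakk>i < N; j < Nh; l \<in> {-1, 1}\<rbrakk> \<Longrightarrow>
      Lalpha \<alpha> p \<beta> (l * (\<beta> \<bullet> xs i) + z i j l \<bullet> (xhs j - xs i))
        \<le> s i + \<kappa> * (1 - l * ys i) / 2 * lam + sh j + \<kappa> * (1 - l * yhs j) / 2 * lamh"
    and "\<And>i j l. \<lbrakk>i < N; j < Nh; l \<in> {-1, 1}\<rbrakk> \<Longrightarrow> pnorm (conj_exp q) (l *\<^sub>R \<beta> - z i j l) \<le> lam"
    and "\<And>i j l. \<lbrakk>i < N; j < Nh; l \<in> {-1, 1}\<rbrakk> \<Longrightarrow> pnorm (conj_exp q) (z i j l) \<le> lamh"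
  using assms unfolding interARO_star_feasible_def by blast+

lemma semi_infinite_constraint:
  assumes feas: "interARO_star_feasible \<kappa> \<alpha> p q N xs ys Nh xhs yhs \<beta> lam lamh s sh z"
    and "1 \<le> q" and ijl: "i < N" "j < Nh" "l \<in> {-1, 1}"
  shows "loss \<alpha> p \<beta> x l - lam * pnorm q (xs i - x) - lamh * pnorm q (xhs j - x)
           \<le> s i + \<kappa> * (1 - l * ys i) / 2 * lam + sh j + \<kappa> * (1 - l * yhs j) / 2 * lamh"
  using interARO_star_feasibleD(1,2)[OF feas] \<open>1 \<le> q\<close> interARO_star_feasibleD(5-7)[OF feas ijl]
  by (rule loss_minus_transport_le)

lemma scaled_dXi_label_eq:
  assumes "l \<in> {-1, 1}" "y \<in> {-1, 1}"
  shows "lam * dXi \<kappa> q (x, l) (x', y) = lam * pnorm q (x' - x) + \<kappa> * (1 - l * y) / 2 * lam"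
  using assms unfolding dXi_def by (auto simp: pnorm_minus_commute[of q x] algebra_simps)

lemma loss_le_transport_costs:
  assumes feas: "interARO_star_feasible \<kappa> \<alpha> p q N xs ys Nh xhs yhs \<beta> lam lamh s sh z"
    and labels: "\<forall>i<N. ys i \<in> {-1, 1}" "\<forall>j<Nh. yhs j \<in> {-1, 1}"
    and "1 \<le> q" "l \<in> {-1, 1}" "i < N" "j < Nh"
  shows "loss \<alpha> p \<beta> x l
           \<le> (s i + lam * dXi \<kappa> q (x, l) (xs i, ys i)) + (sh j + lamh * dXi \<kappa> q (x, l) (xhs j, yhs j))"
  using semi_infinite_constraint[OF feas \<open>1 \<le> q\<close> \<open>i < N\<close> \<open>j < Nh\<close> \<open>l \<in> {-1, 1}\<close>, of x]
    scaled_dXi_label_eq[OF \<open>l \<in> {-1, 1}\<close>, of "ys i" lam \<kappa> q x "xs i"]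
    scaled_dXi_label_eq[OF \<open>l \<in> {-1, 1}\<close>, of "yhs j" lamh \<kappa> q x "xhs j"]
    labels \<open>i < N\<close> \<open>j < Nh\<close>
  by simp

lemma borel_measurable_pnorm: "(\<lambda>x::real^'n. pnorm q x) \<in> borel_measurable borel"
proof (cases "q = \<infinity>")
  case True
  have "(\<lambda>x::real^'n. \<bar>x $ i\<bar>) \<in> borel_measurable borel" for i
    by (intro borel_measurable_continuous_onI continuous_intros)
  then show ?thesis unfolding pnorm_def using True
    using borel_measurable_Max[of UNIV "\<lambda>i x. \<bar>x $ i\<bar>" borel] by simp
next
  case False
  have [measurable]: "(\<lambda>x::real^'n. x $ i) \<in> borel_measurable borel" for i
    by (intro borel_measurable_continuous_onI continuous_intros)
  show ?thesis unfolding pnorm_def using False by measurable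
qed

lemma borel_measurable_pnorm_comp [measurable]:
  "f \<in> borel_measurable M \<Longrightarrow> (\<lambda>x. pnorm q (f x :: real^'n)) \<in> borel_measurable M"
  using measurable_compose[OF _ borel_measurable_pnorm] by blast

lemma measurable_fst_borel [measurable]:
  "(fst :: 'a::topological_space \<times> 'b::topological_space \<Rightarrow> 'a) \<in> borel_measurable borel"
  by (intro borel_measurable_continuous_onI continuous_intros)

lemma measurable_snd_borel [measurable]:
  "(snd :: 'a::topological_space \<times> 'b::topological_space \<Rightarrow> 'b) \<in> borel_measurable borel"
  by (intro borel_measurable_continuous_onI continuous_intros)

lemma dXi_nonneg: "\<kappa> \<ge> 0 \<Longrightarrow> dXi \<kappa> q u v \<ge> 0"
  unfolding dXi_def using pnorm_nonneg[of q "fst u - fst v"] by auto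

lemma nn_integral_le_coupling_cost:
  fixes F G :: "(real^'n) \<times> real \<Rightarrow> ennreal"
  assumes \<pi>: "\<pi> \<in> couplings Q P"
    and [measurable]: "F \<in> borel_measurable borel" "G \<in> borel_measurable borel"
    and cost: "\<And>u v. F u \<le> ennreal lam * ennreal (dXi \<kappa> q u v) + G v"
  shows "(\<integral>\<^sup>+ u. F u \<partial>Q)
           \<le> ennreal lam * (\<integral>\<^sup>+ w. ennreal (dXi \<kappa> q (fst w) (snd w)) \<partial>\<pi>) + (\<integral>\<^sup>+ v. G v \<partial>P)"
proof -
  have "sets \<pi> = sets borel" and Q: "distr \<pi> borel fst = Q" and P: "distr \<pi> borel snd = P"
    using \<pi> unfolding couplings_def by auto
  then have measurable_\<pi>: "measurable \<pi> borel = measurable borel borel"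
    by (intro measurable_cong_sets) auto
  have [measurable]: "fst \<in> measurable \<pi> borel" "snd \<in> measurable \<pi> borel"
    "(\<lambda>w. ennreal (dXi \<kappa> q (fst w) (snd w))) \<in> borel_measurable \<pi>"
    unfolding measurable_\<pi> dXi_def by measurable
  have "(\<integral>\<^sup>+ u. F u \<partial>Q) = (\<integral>\<^sup>+ w. F (fst w) \<partial>\<pi>)"
    unfolding Q[symmetric] by (rule nn_integral_distr) measurable
  also have "\<dots> \<le> (\<integral>\<^sup>+ w. ennreal lam * ennreal (dXi \<kappa> q (fst w) (snd w)) + G (snd w) \<partial>\<pi>)"
    by (intro nn_integral_mono cost)
  also have "\<dots> = ennreal lam * (\<integral>\<^sup>+ w. ennreal (dXi \<kappa> q (fst w) (snd w)) \<partial>\<pi>)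
                   + (\<integral>\<^sup>+ w. G (snd w) \<partial>\<pi>)"
    by (simp add: nn_integral_add nn_integral_cmult)
  also have "(\<integral>\<^sup>+ w. G (snd w) \<partial>\<pi>) = (\<integral>\<^sup>+ v. G v \<partial>P)"
    unfolding P[symmetric] by (rule nn_integral_distr[symmetric]) measurable
  finally show ?thesis .
qed

lemma nn_integral_le_of_wass_le:
  fixes F G :: "(real^'n) \<times> real \<Rightarrow> ennreal"
  assumes W: "wass \<kappa> q Q P \<le> ennreal \<epsilon>" and "lam \<ge> 0" "\<epsilon> \<ge> 0"
    and [measurable]: "F \<in> borel_measurable borel" "G \<in> borel_measurable borel"
    and cost: "\<And>u v. F u \<le> ennreal lam * ennreal (dXi \<kappa> q u v) + G v"
  shows "(\<integral>\<^sup>+ u. F u \<partial>Q) \<le> ennreal (lam * \<epsilon>) + (\<integral>\<^sup>+ v. G v \<partial>P)"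
proof (rule ennreal_le_epsilon)
  fix e :: real assume "0 < e"
  define \<delta> where "\<delta> = e / (lam + 1)"
  have "\<delta> > 0" "lam * \<delta> \<le> e" using \<open>0 < e\<close> \<open>lam \<ge> 0\<close> unfolding \<delta>_def by (auto simp: field_simps)
  have "wass \<kappa> q Q P < ennreal (\<epsilon> + \<delta>)"
    using W \<open>\<delta> > 0\<close> \<open>\<epsilon> \<ge> 0\<close> by (metis add_pos_nonneg ennreal_lessI less_add_same_cancel1 order.strict_trans1)
  then obtain \<pi> where \<pi>: "\<pi> \<in> couplings Q P"
    and "(\<integral>\<^sup>+ w. ennreal (dXi \<kappa> q (fst w) (snd w)) \<partial>\<pi>) < ennreal (\<epsilon> + \<delta>)"
    unfolding wass_def by (auto simp: INF_less_iff)
  then have "ennreal lam * (\<integral>\<^sup>+ w. ennreal (dXi \<kappa> q (fst w) (snd w)) \<partial>\<pi>) \<le> ennreal lam * ennreal (\<epsilon> + \<delta>)"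
    by (intro mult_left_mono) auto
  also have "\<dots> = ennreal (lam * \<epsilon>) + ennreal (lam * \<delta>)"
    using \<open>lam \<ge> 0\<close> \<open>\<epsilon> \<ge> 0\<close> \<open>\<delta> > 0\<close> by (simp add: ennreal_mult[symmetric] distrib_left ennreal_plus)
  also have "\<dots> \<le> ennreal (lam * \<epsilon>) + ennreal e"
    using \<open>lam * \<delta> \<le> e\<close> by (intro add_left_mono ennreal_leI)
  finally have "ennreal lam * (\<integral>\<^sup>+ w. ennreal (dXi \<kappa> q (fst w) (snd w)) \<partial>\<pi>) + (\<integral>\<^sup>+ v. G v \<partial>P)
      \<le> ennreal (lam * \<epsilon>) + ennreal e + (\<integral>\<^sup>+ v. G v \<partial>P)"
    by (rule add_right_mono)
  with nn_integral_le_coupling_cost[OF \<pi> assms(4,5) cost]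
  show "(\<integral>\<^sup>+ u. F u \<partial>Q) \<le> ennreal (lam * \<epsilon>) + (\<integral>\<^sup>+ v. G v \<partial>P) + ennreal e"
    by (simp only: ac_simps)
qed

lemma nn_integral_empirical:
  assumes [measurable]: "G \<in> borel_measurable borel"
  shows "(\<integral>\<^sup>+ v. G v \<partial>empirical N xs ys) = (\<Sum>i<N. ennreal (1 / real N) * G (xs i, ys i))"
proof -
  have "(\<lambda>i. (xs i, ys i)) \<in> measurable (uniform_count_measure {..<N}) borel"
    by (simp add: measurable_cong_sets[OF sets_uniform_count_measure_count_space refl])
  then have "(\<integral>\<^sup>+ v. G v \<partial>empirical N xs ys) = (\<integral>\<^sup>+ i. G (xs i, ys i) \<partial>uniform_count_measure {..<N})"
    unfolding empirical_def by (rule nn_integral_distr) measurable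
  then show ?thesis
    unfolding uniform_count_measure_def by (simp add: nn_integral_point_measure_finite)
qed

text \<open>The cost \<open>G\<close> below is \<open>s\<^sub>i\<close> at the \<open>i\<close>-th sample and \<open>\<infinity>\<close> off the samples, so that every
  \<open>u\<close> can be transported to any \<open>v\<close> at cost \<open>min\<^sub>i (s\<^sub>i + \<lambda> d(u, \<xi>\<^sup>i))\<close>.\<close>
lemma nn_integral_min_cost_le_empirical:
  assumes W: "wass \<kappa> q Q (empirical N xs ys) \<le> ennreal \<epsilon>"
    and "\<kappa> \<ge> 0" "lam \<ge> 0" "\<epsilon> \<ge> 0" "N > 0" and s: "\<forall>i<N. s i \<ge> 0"
  shows "(\<integral>\<^sup>+ u. ennreal (Min ((\<lambda>i. s i + lam * dXi \<kappa> q u (xs i, ys i)) ` {..<N})) \<partial>Q)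
           \<le> ennreal (lam * \<epsilon> + (\<Sum>i<N. s i) / real N)"
proof -
  define F where "F u = Min ((\<lambda>i. s i + lam * dXi \<kappa> q u (xs i, ys i)) ` {..<N})" for u
  define G where "G v = Min ((\<lambda>i. if v = (xs i, ys i) then ennreal (s i) else \<infinity>) ` {..<N})" for v
  have [measurable]: "F \<in> borel_measurable borel" "G \<in> borel_measurable borel"
    unfolding F_def G_def dXi_def by measurable
  have cost: "ennreal (F u) \<le> ennreal lam * ennreal (dXi \<kappa> q u v) + G v" for u v
  proof -
    have "G v \<in> (\<lambda>i. if v = (xs i, ys i) then ennreal (s i) else \<infinity>) ` {..<N}"
      unfolding G_def using \<open>N > 0\<close> by (intro Min_in) auto
    then obtain k where "k < N" and k: "G v = (if v = (xs k, ys k) then ennreal (s k) else \<infinity>)"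
      by blast
    show ?thesis
    proof (cases "v = (xs k, ys k)")
      case True
      have "F u \<le> s k + lam * dXi \<kappa> q u v"
        unfolding F_def True using \<open>k < N\<close> by (intro Min_le) auto
      then have "ennreal (F u) \<le> ennreal (s k + lam * dXi \<kappa> q u v)" by (rule ennreal_leI)
      also have "\<dots> = ennreal (s k) + ennreal lam * ennreal (dXi \<kappa> q u v)"
        using \<open>lam \<ge> 0\<close> dXi_nonneg[OF \<open>\<kappa> \<ge> 0\<close>, of q u v] s \<open>k < N\<close>
        by (simp only: ennreal_plus ennreal_mult' mult_nonneg_nonneg)
      finally show ?thesis using k True by (simp add: add.commute)
    qed (use k in simp)
  qed
  have "(\<integral>\<^sup>+ v. G v \<partial>empirical N xs ys) = (\<Sum>i<N. ennreal (1 / real N) * G (xs i, ys i))"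
    by (rule nn_integral_empirical) measurable
  also have "\<dots> \<le> (\<Sum>i<N. ennreal (1 / real N) * ennreal (s i))"
    unfolding G_def by (intro sum_mono mult_left_mono Min_le) auto
  also have "\<dots> = ennreal ((\<Sum>i<N. s i) / real N)"
    using s by (simp add: ennreal_mult[symmetric] sum_divide_distrib, subst sum_ennreal) auto
  finally have "(\<integral>\<^sup>+ v. G v \<partial>empirical N xs ys) \<le> ennreal ((\<Sum>i<N. s i) / real N)" .
  then have "ennreal (lam * \<epsilon>) + (\<integral>\<^sup>+ v. G v \<partial>empirical N xs ys)
      \<le> ennreal (lam * \<epsilon>) + ennreal ((\<Sum>i<N. s i) / real N)"
    by (rule add_left_mono)
  also have "\<dots> = ennreal (lam * \<epsilon> + (\<Sum>i<N. s i) / real N)"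
    using \<open>lam \<ge> 0\<close> \<open>\<epsilon> \<ge> 0\<close> s
    by (intro ennreal_plus[symmetric] mult_nonneg_nonneg divide_nonneg_nonneg sum_nonneg) auto
  finally have "ennreal (lam * \<epsilon>) + (\<integral>\<^sup>+ v. G v \<partial>empirical N xs ys)
      \<le> ennreal (lam * \<epsilon> + (\<Sum>i<N. s i) / real N)" .
  moreover have "(\<integral>\<^sup>+ u. ennreal (F u) \<partial>Q) \<le> ennreal (lam * \<epsilon>) + (\<integral>\<^sup>+ v. G v \<partial>empirical N xs ys)"
    by (rule nn_integral_le_of_wass_le[OF W \<open>lam \<ge> 0\<close> \<open>\<epsilon> \<ge> 0\<close> _ _ cost]) measurable
  ultimately show ?thesis unfolding F_def by (rule order_trans[rotated])
qed

lemma integral_le_of_nn_integral_le: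
  assumes [measurable]: "f \<in> borel_measurable M"
    and "\<And>x. f x \<ge> 0" "(\<integral>\<^sup>+ x. ennreal (f x) \<partial>M) \<le> ennreal c" "c \<ge> 0"
  shows "(\<integral>x. f x \<partial>M) \<le> c"
proof -
  have "(\<integral>x. f x \<partial>M) = enn2real (\<integral>\<^sup>+ x. ennreal (f x) \<partial>M)"
    using assms(2) by (intro integral_eq_nn_integral) auto
  also have "\<dots> \<le> c"
    using assms(3,4) enn2real_mono[OF assms(3)] by simp
  finally show ?thesis .
qed

lemma loss_nonneg: "loss \<alpha> p \<beta> x y \<ge> 0"
  unfolding loss_def Lalpha_def by (simp add: add_pos_pos)

lemma Min_cost_nonneg:
  fixes N :: nat
  assumes "N > 0" "\<kappa> \<ge> 0" "lam \<ge> 0" "\<forall>i<N. s i \<ge> 0"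
  shows "Min ((\<lambda>i. s i + lam * dXi \<kappa> q u (xs i, ys i)) ` {..<N}) \<ge> 0"
  using assms dXi_nonneg[OF \<open>\<kappa> \<ge> 0\<close>, of q u] by (intro Min.boundedI) auto

lemma expected_loss_le_interARO_star_obj:
  assumes feas: "interARO_star_feasible \<kappa> \<alpha> p q N xs ys Nh xhs yhs \<beta> lam lamh s sh z"
    and labels: "\<forall>i<N. ys i \<in> {-1, 1}" "\<forall>j<Nh. yhs j \<in> {-1, 1}"
    and "\<kappa> \<ge> 0" "1 \<le> q" "\<epsilon> \<ge> 0" "\<epsilon>h \<ge> 0" "N > 0" "Nh > 0"
    and Q: "Q \<in> wball \<kappa> q \<epsilon> (empirical N xs ys) \<inter> wball \<kappa> q \<epsilon>h (empirical Nh xhs yhs)"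
  shows "(\<integral>u. loss \<alpha> p \<beta> (fst u) (snd u) \<partial>Q) \<le> interARO_star_obj \<epsilon> \<epsilon>h N Nh lam lamh s sh"
proof -
  note nonneg = interARO_star_feasibleD(1-4)[OF feas]
  have "sets Q = sets borel" and Xi: "AE u in Q. u \<in> Xi"
    and W: "wass \<kappa> q Q (empirical N xs ys) \<le> ennreal \<epsilon>" "wass \<kappa> q Q (empirical Nh xhs yhs) \<le> ennreal \<epsilon>h"
    using Q unfolding wball_def P1_def by auto
  then have measurable_Q: "measurable Q borel = measurable borel borel"
    by (intro measurable_cong_sets) auto
  define F where "F u = Min ((\<lambda>i. s i + lam * dXi \<kappa> q u (xs i, ys i)) ` {..<N})" for u
  define H where "H u = Min ((\<lambda>j. sh j + lamh * dXi \<kappa> q u (xhs j, yhs j)) ` {..<Nh})" for u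
  have "F u \<ge> 0" "H u \<ge> 0" for u
    unfolding F_def H_def using nonneg assms(4,8,9) by (auto intro!: Min_cost_nonneg)
  have loss_le: "loss \<alpha> p \<beta> (fst u) (snd u) \<le> F u + H u" if "u \<in> Xi" for u
  proof -
    have "F u \<in> (\<lambda>i. s i + lam * dXi \<kappa> q u (xs i, ys i)) ` {..<N}"
      "H u \<in> (\<lambda>j. sh j + lamh * dXi \<kappa> q u (xhs j, yhs j)) ` {..<Nh}"
      unfolding F_def H_def using \<open>N > 0\<close> \<open>Nh > 0\<close> by (auto intro!: Min_in)
    then obtain i j where "i < N" "j < Nh"
      and "F u = s i + lam * dXi \<kappa> q u (xs i, ys i)" "H u = sh j + lamh * dXi \<kappa> q u (xhs j, yhs j)"
      by auto
    moreover have "snd u \<in> {-1, 1}" using \<open>u \<in> Xi\<close> unfolding Xi_def by auto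
    ultimately show ?thesis
      using loss_le_transport_costs[OF feas labels \<open>1 \<le> q\<close> \<open>snd u \<in> {-1, 1}\<close> \<open>i < N\<close> \<open>j < Nh\<close>, of "fst u"]
      by simp
  qed
  have [measurable]: "F \<in> borel_measurable borel" "H \<in> borel_measurable borel"
    "(\<lambda>u. loss \<alpha> p \<beta> (fst u) (snd u)) \<in> borel_measurable borel"
    unfolding F_def H_def dXi_def loss_def Lalpha_def by measurable
  have obj_eq: "interARO_star_obj \<epsilon> \<epsilon>h N Nh lam lamh s sh
      = (lam * \<epsilon> + (\<Sum>i<N. s i) / real N) + (lamh * \<epsilon>h + (\<Sum>j<Nh. sh j) / real Nh)"
    unfolding interARO_star_obj_def by (simp add: algebra_simps)
  have obj_parts_nonneg: "lam * \<epsilon> + (\<Sum>i<N. s i) / real N \<ge> 0" "lamh * \<epsilon>h + (\<Sum>j<Nh. sh j) / real Nh \<ge> 0"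
    using nonneg \<open>\<epsilon> \<ge> 0\<close> \<open>\<epsilon>h \<ge> 0\<close>
    by (auto intro!: add_nonneg_nonneg mult_nonneg_nonneg divide_nonneg_nonneg sum_nonneg)
  have "AE u in Q. ennreal (loss \<alpha> p \<beta> (fst u) (snd u)) \<le> ennreal (F u) + ennreal (H u)"
    using Xi
  proof eventually_elim
    case (elim u)
    then show ?case
      using ennreal_leI[OF loss_le[OF elim]] ennreal_plus[OF \<open>F u \<ge> 0\<close> \<open>H u \<ge> 0\<close>] by simp
  qed
  then have "(\<integral>\<^sup>+ u. ennreal (loss \<alpha> p \<beta> (fst u) (snd u)) \<partial>Q) \<le> (\<integral>\<^sup>+ u. ennreal (F u) + ennreal (H u) \<partial>Q)"
    by (rule nn_integral_mono_AE)
  also have "\<dots> = (\<integral>\<^sup>+ u. ennreal (F u) \<partial>Q) + (\<integral>\<^sup>+ u. ennreal (H u) \<partial>Q)"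
    by (rule nn_integral_add) (simp_all add: measurable_Q)
  also have "\<dots> \<le> ennreal (lam * \<epsilon> + (\<Sum>i<N. s i) / real N) + ennreal (lamh * \<epsilon>h + (\<Sum>j<Nh. sh j) / real Nh)"
    unfolding F_def H_def using W nonneg \<open>\<kappa> \<ge> 0\<close> \<open>\<epsilon> \<ge> 0\<close> \<open>\<epsilon>h \<ge> 0\<close> \<open>N > 0\<close> \<open>Nh > 0\<close>
    by (intro add_mono nn_integral_min_cost_le_empirical) auto
  also have "\<dots> = ennreal (interARO_star_obj \<epsilon> \<epsilon>h N Nh lam lamh s sh)"
    unfolding obj_eq by (rule ennreal_plus[OF obj_parts_nonneg, symmetric])
  finally show ?thesis
    using obj_parts_nonneg unfolding obj_eq
    by (intro integral_le_of_nn_integral_le) (simp_all add: measurable_Q loss_nonneg)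
qed

lemma interARO_value_le_interARO_star_value:
  assumes labels: "\<forall>i<N. ys i \<in> {-1, 1}" "\<forall>j<Nh. yhs j \<in> {-1, 1}"
    and "\<kappa> \<ge> 0" "1 \<le> q" "\<epsilon> \<ge> 0" "\<epsilon>h \<ge> 0" "N > 0" "Nh > 0"
  shows "interARO_value \<kappa> \<alpha> p q \<epsilon> \<epsilon>h N xs ys Nh xhs yhs
           \<le> interARO_star_value \<kappa> \<alpha> p q \<epsilon> \<epsilon>h N xs ys Nh xhs yhs"
  unfolding interARO_star_value_def
proof (rule INF_greatest, clarify)
  fix \<beta> lam lamh s sh z
  assume feas: "interARO_star_feasible \<kappa> \<alpha> p q N xs ys Nh xhs yhs \<beta> lam lamh s sh z"
  have "interARO_value \<kappa> \<alpha> p q \<epsilon> \<epsilon>h N xs ys Nh xhs yhs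
      \<le> (SUP Q \<in> wball \<kappa> q \<epsilon> (empirical N xs ys) \<inter> wball \<kappa> q \<epsilon>h (empirical Nh xhs yhs).
            ereal (\<integral>u. loss \<alpha> p \<beta> (fst u) (snd u) \<partial>Q))"
    unfolding interARO_value_def by (rule INF_lower) simp
  also have "\<dots> \<le> ereal (interARO_star_obj \<epsilon> \<epsilon>h N Nh lam lamh s sh)"
    using expected_loss_le_interARO_star_obj[OF feas assms] by (intro SUP_least) simp
  finally show "interARO_value \<kappa> \<alpha> p q \<epsilon> \<epsilon>h N xs ys Nh xhs yhs
      \<le> ereal (interARO_star_obj \<epsilon> \<epsilon>h N Nh lam lamh s sh)" .
qed

theorem theorem1:
  fixes \<kappa> \<alpha> \<epsilon> \<epsilon>h :: real and p q :: ereal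
    and N Nh :: nat
    and xs xhs :: "nat \<Rightarrow> real ^ 'n" and ys yhs :: "nat \<Rightarrow> real"
  assumes "\<kappa> \<ge> 0" and "\<alpha> \<ge> 0"
    and "1 \<le> p" and "1 \<le> q"
    and "\<epsilon> \<ge> 0" and "\<epsilon>h \<ge> 0"
    and "N > 0" and "Nh > 0"
    and "\<forall>i<N. ys i \<in> {-1, 1}" and "\<forall>j<Nh. yhs j \<in> {-1, 1}"
  shows "(\<forall>\<beta> lam lamh s sh z.
            interARO_star_feasible \<kappa> \<alpha> p q N xs ys Nh xhs yhs \<beta> lam lamh s sh z \<longrightarrow>
              (\<forall>i<N. \<forall>j<Nh. \<forall>l\<in>{-1, 1::real}.
                 (SUP x. ereal (loss \<alpha> p \<beta> x l - lam * pnorm q (xs i - x) - lamh * pnorm q (xhs j - x)))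
                   \<le> ereal (s i + \<kappa> * (1 - l * ys i) / 2 * lam + sh j + \<kappa> * (1 - l * yhs j) / 2 * lamh)) \<and>
              (\<forall>Q \<in> wball \<kappa> q \<epsilon> (empirical N xs ys) \<inter> wball \<kappa> q \<epsilon>h (empirical Nh xhs yhs).
                 (\<integral>u. loss \<alpha> p \<beta> (fst u) (snd u) \<partial>Q) \<le> interARO_star_obj \<epsilon> \<epsilon>h N Nh lam lamh s sh))
         \<and> interARO_value \<kappa> \<alpha> p q \<epsilon> \<epsilon>h N xs ys Nh xhs yhs
             \<le> interARO_star_value \<kappa> \<alpha> p q \<epsilon> \<epsilon>h N xs ys Nh xhs yhs"
proof (intro conjI allI impI ballI SUP_least)
  fix \<beta> lam lamh s sh z i j x and l :: real
  assume feas: "interARO_star_feasible \<kappa> \<alpha> p q N xs ys Nh xhs yhs \<beta> lam lamh s sh z"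
    and ijl: "i < N" "j < Nh" "l \<in> {-1, 1}"
  show "ereal (loss \<alpha> p \<beta> x l - lam * pnorm q (xs i - x) - lamh * pnorm q (xhs j - x))
      \<le> ereal (s i + \<kappa> * (1 - l * ys i) / 2 * lam + sh j + \<kappa> * (1 - l * yhs j) / 2 * lamh)"
    using semi_infinite_constraint[OF feas \<open>1 \<le> q\<close> ijl] by simp
next
  fix \<beta> lam lamh s sh z Q
  assume "interARO_star_feasible \<kappa> \<alpha> p q N xs ys Nh xhs yhs \<beta> lam lamh s sh z"
    and "Q \<in> wball \<kappa> q \<epsilon> (empirical N xs ys) \<inter> wball \<kappa> q \<epsilon>h (empirical Nh xhs yhs)"
  then show "(\<integral>u. loss \<alpha> p \<beta> (fst u) (snd u) \<partial>Q) \<le> interARO_star_obj \<epsilon> \<epsilon>h N Nh lam lamh s sh"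
    using expected_loss_le_interARO_star_obj assms by blast
next
  show "interARO_value \<kappa> \<alpha> p q \<epsilon> \<epsilon>h N xs ys Nh xhs yhs
      \<le> interARO_star_value \<kappa> \<alpha> p q \<epsilon> \<epsilon>h N xs ys Nh xhs yhs"
    using assms by (intro interARO_value_le_interARO_star_value) auto
qed

end
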